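(* The function $\sigma$ satisfies $$\lim_{T\to0^+}\sigma(T)=+\infty\qquad\text{and}\qquad\lim_{T\to+\infty}\sigma(T)=-\infty,$$ where $\sigma(T)=c'(1)+\phi_1''(1)$ and $c=c_T$ is the continuous solution on $[0,1]$ of $$c''+(n-1)\frac{C_k(r)}{S_k(r)}c'+\Big[\lambda_1-\Big(\frac{2\pi}{T}\Big)^2\Big]c=0,\qquad c(1)=-\phi_1'(1).$$
   Context: Let $n\ge 2$ and $k\in\{1,-1\}$; $S_k=\sin,\ C_k=\cos$ if $k=1$ and $S_k=\sinh,\ C_k=\cosh$ if $k=-1$ (so that $dr^2+S_k(r)^2d\theta^2$ is the metric of $\mathbb{S}^n$, resp. $\mathbb{H}^n$, in geodesic polar coordinates). $\lambda_1$ is the smallest positive number for which the ODE $u''+(n-1)\frac{C_k(r)}{S_k(r)}u'+\lambda_1u=0$ has a solution $\phi_1$ bounded at $r=0$, positive on $[0,1)$ and vanishing at $r=1$ (the first Dirichlet eigenvalue of the unit geodesic ball); $\phi_1$ is such a solution, normalized so that the function $(x,t)\mapsto\phi_1(\|x\|)$ has $L^2$ norm $1$ on $B_1\times[0,2\pi]$. $\sigma(T)$ coincides with the eigenvalue of the linearized operator $H_T$ on $\cos t$. *)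

theory Defs
  imports "HOL-Analysis.Analysis"
begin

text \<open>S_k and C_k: k = 1 gives the sphere, k = -1 the hyperbolic space.\<close>
definition Sk :: "int \<Rightarrow> real \<Rightarrow> real" where
  "Sk k r = (if k = 1 then sin r else sinh r)"

definition Ck :: "int \<Rightarrow> real \<Rightarrow> real" where
  "Ck k r = (if k = 1 then cos r else cosh r)"

definition radial_sol ::
  "nat \<Rightarrow> int \<Rightarrow> real \<Rightarrow> (real \<Rightarrow> real) \<Rightarrow> (real \<Rightarrow> real) \<Rightarrow> (real \<Rightarrow> real) \<Rightarrow> bool" where
  "radial_sol n k mu u u' u'' \<longleftrightarrow>
     (\<forall>r\<in>{0<..1}. (u has_real_derivative u' r) (at r within {0<..1}) \<and>
                  (u' has_real_derivative u'' r) (at r within {0<..1}) \<and>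
                  u'' r + (real n - 1) * (Ck k r / Sk k r) * u' r + mu * u r = 0)"

definition dirichlet_eigenfunction ::
  "nat \<Rightarrow> int \<Rightarrow> real \<Rightarrow> (real \<Rightarrow> real) \<Rightarrow> (real \<Rightarrow> real) \<Rightarrow> (real \<Rightarrow> real) \<Rightarrow> bool" where
  "dirichlet_eigenfunction n k mu u u' u'' \<longleftrightarrow>
     radial_sol n k mu u u' u'' \<and> bounded (u ` {0<..1}) \<and>
     (\<forall>r\<in>{0..<1}. u r > 0) \<and> u 1 = 0"

definition first_eigenvalue :: "nat \<Rightarrow> int \<Rightarrow> real \<Rightarrow> bool" where
  "first_eigenvalue n k lam \<longleftrightarrow>
     (let E = {mu. mu > 0 \<and> (\<exists>u u' u''. dirichlet_eigenfunction n k mu u u' u'')}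
      in lam \<in> E \<and> (\<forall>mu\<in>E. lam \<le> mu))"

definition sphere_area :: "nat \<Rightarrow> real" where
  "sphere_area n = 2 * pi powr (real n / 2) / Gamma (real n / 2)"

text \<open>L^2 norm of (x,t) \<mapsto> u(|x|) over B_1 \<times> [0,2 pi] equals 1, written in geodesic polar
  coordinates: volume element S_k(r)^(n-1) dr d\<theta> dt.\<close>
definition L2_normalized :: "nat \<Rightarrow> int \<Rightarrow> (real \<Rightarrow> real) \<Rightarrow> bool" where
  "L2_normalized n k u \<longleftrightarrow>
     (\<lambda>r. (u r)\<^sup>2 * (Sk k r) ^ (n - 1)) integrable_on {0..1} \<and>
     2 * pi * sphere_area n * integral {0..1} (\<lambda>r. (u r)\<^sup>2 * (Sk k r) ^ (n - 1)) = 1"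

end

theory Submission
  imports Defs "HOL-Real_Asymp.Real_Asymp"
begin

text \<open>
  Write \<open>w = S\<^sub>k\<^sup>n\<^sup>-\<^sup>1\<close>, so that the radial equation with parameter \<open>\<mu>\<close> reads \<open>(w u')' = - \<mu> w u\<close>, and put
  \<open>\<epsilon> = (2\<pi>/T)\<^sup>2\<close>; then \<open>c\<close> solves it with \<open>\<mu> = \<lambda>\<^sub>1 - \<epsilon>\<close> and \<open>c(1) = -\<phi>\<^sub>1'(1) > 0\<close> (Hopf). Since
  \<open>\<phi>\<^sub>1''(1)\<close> is a constant, the claim is that \<open>c'(1) \<rightarrow> +\<infinity>\<close> as \<open>\<epsilon> \<rightarrow> \<infinity>\<close> and \<open>c'(1) \<rightarrow> -\<infinity>\<close> as
  \<open>\<epsilon> \<rightarrow> 0\<^sup>+\<close>.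

  Bounded solutions have vanishing flux \<open>w u'\<close> at the origin, hence so does the weighted Wronskian
  \<open>W = w (c' \<phi>\<^sub>1 - c \<phi>\<^sub>1')\<close>, whose derivative is \<open>\<epsilon> w c \<phi>\<^sub>1\<close>. A Sturm comparison on a negative
  excursion of \<open>c\<close> then shows \<open>c \<ge> 0\<close> for every \<open>\<epsilon> > 0\<close>.
  For large \<open>\<epsilon>\<close> the flux \<open>w c'\<close> grows at rate \<open>(\<epsilon> - \<lambda>\<^sub>1) w c \<ge> 0\<close>; if \<open>c'(1)\<close> stayed bounded,
  \<open>c'\<close> would be bounded near \<open>1\<close>, so \<open>c \<ge> c(1)/2\<close> on a fixed interval \<open>[1-\<delta>,1]\<close>, and the flux
  would gain at least \<open>(\<epsilon> - \<lambda>\<^sub>1) c(1) \<delta> inf w / 2\<close> there, which is unbounded.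
  For small \<open>\<epsilon>\<close>, with \<open>M \<ge> sup \<phi>\<^sub>1\<close>, the function \<open>M w c' + ((\<lambda>\<^sub>1 - \<epsilon>)/\<epsilon>) W\<close> has derivative
  \<open>-(\<lambda>\<^sub>1 - \<epsilon>) w c (M - \<phi>\<^sub>1) \<le> 0\<close> and vanishes at \<open>0\<close>; its value at \<open>1\<close> gives
  \<open>c'(1) \<le> -(\<lambda>\<^sub>1 - \<epsilon>) \<phi>\<^sub>1'(1)\<^sup>2 / (\<epsilon> M)\<close>.
\<close>

section \<open>Calculus on the interval (0,1]\<close>

lemma radial_deriv_at_interior:
  assumes "(f has_real_derivative D) (at x within {0<..1})" "0 < x" "x < 1"
  shows "(f has_real_derivative D) (at x)"
proof -
  have "(f has_real_derivative D) (at x within {0<..<1})"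
    by (rule DERIV_subset[OF assms(1)]) auto
  then show ?thesis using at_within_open[of x "{0<..<1}"] assms(2,3) by auto
qed

lemma radial_mvt:
  fixes f f' :: "real \<Rightarrow> real"
  assumes f': "\<And>r. r \<in> {0<..1} \<Longrightarrow> (f has_real_derivative f' r) (at r within {0<..1})"
    and "0 < a" "a < b" "b \<le> 1"
  obtains \<xi> where "a < \<xi>" "\<xi> < b" "f b - f a = f' \<xi> * (b - a)"
proof -
  have "continuous_on {a..b} f"
    by (rule DERIV_continuous_on, rule DERIV_subset[OF f']) (use assms in auto)
  moreover have "(f has_derivative (\<lambda>h. f' x * h)) (at x)" if "a < x" "x < b" for x
  proof -
    have "(f has_real_derivative f' x) (at x)"
      using radial_deriv_at_interior[OF f'] that assms by auto
    then show ?thesis unfolding has_field_derivative_def by simp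
  qed
  ultimately show ?thesis
    using mvt[OF assms(3), of f "\<lambda>x h. f' x * h"] that by blast
qed

lemma radial_deriv_nonneg_imp_le:
  fixes f f' :: "real \<Rightarrow> real"
  assumes "\<And>r. r \<in> {0<..1} \<Longrightarrow> (f has_real_derivative f' r) (at r within {0<..1})"
    and "0 < x" "x \<le> y" "y \<le> 1" and "\<And>r. x < r \<Longrightarrow> r < y \<Longrightarrow> 0 \<le> f' r"
  shows "f x \<le> f y"
proof (cases "x = y")
  case False
  then obtain \<xi> where "x < \<xi>" "\<xi> < y" "f y - f x = f' \<xi> * (y - x)"
    using radial_mvt[OF assms(1), of x y] assms(2-4) by auto
  then show ?thesis using assms(5)[of \<xi>] assms(3) by (metis diff_ge_0_iff_ge mult_nonneg_nonneg)
qed simp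

lemma radial_deriv_neg_imp_less:
  fixes f f' :: "real \<Rightarrow> real"
  assumes "\<And>r. r \<in> {0<..1} \<Longrightarrow> (f has_real_derivative f' r) (at r within {0<..1})"
    and "0 < x" "x < y" "y \<le> 1" and "\<And>r. x < r \<Longrightarrow> r < y \<Longrightarrow> f' r < 0"
  shows "f y < f x"
proof -
  obtain \<xi> where "x < \<xi>" "\<xi> < y" "f y - f x = f' \<xi> * (y - x)"
    using radial_mvt[OF assms(1-4)] by blast
  then show ?thesis using assms(5)[of \<xi>] assms(3) mult_neg_pos[of "f' \<xi>" "y - x"] by simp
qed

lemma radial_deriv_nonneg_imp_limit_le:
  fixes f f' :: "real \<Rightarrow> real"
  assumes "\<And>r. r \<in> {0<..1} \<Longrightarrow> (f has_real_derivative f' r) (at r within {0<..1})"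
    and "(f \<longlongrightarrow> L) (at_right 0)" "0 < y" "y \<le> 1" and "\<And>r. 0 < r \<Longrightarrow> r < y \<Longrightarrow> 0 \<le> f' r"
  shows "L \<le> f y"
proof (rule tendsto_upperbound[OF assms(2)])
  have "\<forall>\<^sub>F x in at_right 0. 0 < x \<and> x < y"
    unfolding eventually_at_right_field using assms(3) by (intro exI[of _ y]) auto
  then show "\<forall>\<^sub>F x in at_right 0. f x \<le> f y"
    by (rule eventually_mono) (use radial_deriv_nonneg_imp_le[OF assms(1)] assms(4,5) in auto)
qed simp

lemma strict_antimono_less_right_limit:
  fixes W :: "real \<Rightarrow> real"
  assumes "(W \<longlongrightarrow> L) (at_right s)" "s < t" and dec: "\<And>x y. s < x \<Longrightarrow> x < y \<Longrightarrow> y \<le> t \<Longrightarrow> W y < W x"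
  shows "W t < L"
proof -
  define m where "m = (s + t) / 2"
  have "s < m" "m < t" unfolding m_def using assms(2) by auto
  have "W m \<le> L"
  proof (rule tendsto_lowerbound[OF assms(1)])
    have "\<forall>\<^sub>F x in at_right s. s < x \<and> x < m"
      unfolding eventually_at_right_field using \<open>s < m\<close> by (intro exI[of _ m]) auto
    then show "\<forall>\<^sub>F x in at_right s. W m \<le> W x"
      by (rule eventually_mono) (use dec \<open>m < t\<close> in \<open>auto intro: less_imp_le\<close>)
  qed simp
  moreover have "W t < W m" using dec \<open>s < m\<close> \<open>m < t\<close> by simp
  ultimately show ?thesis by simp
qed

lemma deriv_nonneg_at_right_end:
  fixes f :: "real \<Rightarrow> real"
  assumes "(f has_real_derivative D) (at t within {0<..1})"
    and "0 \<le> a" "a < t" "t \<le> 1" and le: "\<And>y. a < y \<Longrightarrow> y < t \<Longrightarrow> f y \<le> f t"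
  shows "0 \<le> D"
proof (rule ccontr)
  assume "\<not> 0 \<le> D"
  then obtain d where "d > 0" and d: "\<And>h. h > 0 \<Longrightarrow> t - h \<in> {0<..1} \<Longrightarrow> h < d \<Longrightarrow> f t < f (t - h)"
    using has_real_derivative_neg_dec_left[OF assms(1)] by force
  define h where "h = min (d / 2) ((t - a) / 2)"
  have "h > 0" "h < d" "a < t - h" "t - h < t"
    unfolding h_def using \<open>d > 0\<close> assms(3) by (auto simp: min_def field_simps)
  then show False using d[of h] le[of "t - h"] assms(2,4) by auto
qed

lemma deriv_nonpos_at_left_end:
  fixes f :: "real \<Rightarrow> real"
  assumes "(f has_real_derivative D) (at s within {0<..1})"
    and "0 < s" "s < b" "b \<le> 1" and le: "\<And>y. s < y \<Longrightarrow> y < b \<Longrightarrow> f y \<le> f s"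
  shows "D \<le> 0"
proof (rule ccontr)
  assume "\<not> D \<le> 0"
  then obtain d where "d > 0" and d: "\<And>h. h > 0 \<Longrightarrow> s + h \<in> {0<..1} \<Longrightarrow> h < d \<Longrightarrow> f s < f (s + h)"
    using has_real_derivative_pos_inc_right[OF assms(1)] by force
  define h where "h = min (d / 2) ((b - s) / 2)"
  have "h > 0" "h < d" "s + h < b"
    unfolding h_def using \<open>d > 0\<close> assms(3) by (auto simp: min_def field_simps)
  then show False using d[of h] le[of "s + h"] assms(2,4) by auto
qed

lemma radial_deriv_ge_inverse_unbounded:
  fixes u u' :: "real \<Rightarrow> real"
  assumes u': "\<And>r. r \<in> {0<..1} \<Longrightarrow> (u has_real_derivative u' r) (at r within {0<..1})"
    and B: "\<forall>r\<in>{0<..1}. \<bar>u r\<bar> \<le> B"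
    and "0 < s" "s \<le> 1" "A > 0" and ge: "\<And>r. 0 < r \<Longrightarrow> r \<le> s \<Longrightarrow> A / r \<le> u' r"
  shows False
proof -
  define r where "r = s * exp (- (2 * B / A) - 1)"
  have "B \<ge> 0" using B assms(3,4) by force
  then have "2 * B / A \<ge> 0" using \<open>A > 0\<close> by simp
  then have "exp (- (2 * B / A) - 1) < 1" using \<open>A > 0\<close> by simp
  then have r: "0 < r" "r < s" unfolding r_def using assms(3) by auto
  have "((\<lambda>x. u x - A * ln x) has_real_derivative u' x - A / x) (at x within {0<..1})"
    if "x \<in> {0<..1}" for x
    using u'[OF that] that by (auto intro!: derivative_eq_intros simp: divide_inverse)
  then have "u r - A * ln r \<le> u s - A * ln s"
    by (rule radial_deriv_nonneg_imp_le) (use r assms(4) ge in auto)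
  moreover have "A * (ln s - ln r) = 2 * B + A"
    unfolding r_def using assms(3,5) by (simp add: ln_mult field_simps)
  moreover have "\<bar>u r\<bar> \<le> B" "\<bar>u s\<bar> \<le> B" using B r assms(3,4) by auto
  ultimately show False using \<open>A > 0\<close> by (simp add: right_diff_distrib)
qed

lemma continuous_on_neg_excursion:
  fixes f :: "real \<Rightarrow> real"
  assumes f: "continuous_on {a..b} f" and "a < x" "x < b" "f x < 0" "f b > 0"
  obtains s t where "a \<le> s" "s < x" "x < t" "t < b" "f t = 0" "s = a \<or> f s = 0"
    "\<And>y. s < y \<Longrightarrow> y < t \<Longrightarrow> f y < 0"
proof -
  have zero_between: "\<exists>w. p \<le> w \<and> w \<le> q \<and> f w = 0"
    if "a \<le> p" "p \<le> q" "q \<le> b" "f p \<le> 0 \<and> 0 \<le> f q \<or> f q \<le> 0 \<and> 0 \<le> f p" for p q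
    using that IVT'[of f p 0 q] IVT2'[of f q 0 p] continuous_on_subset[OF f, of "{p..q}"] by auto
  have closed_zeros: "compact ({p..q} \<inter> f -` {0})" if "a \<le> p" "q \<le> b" for p q
    using continuous_closed_preimage[OF continuous_on_subset[OF f, of "{p..q}"]] that
    by (simp add: compact_eq_bounded_closed bounded_Int)
  obtain t where t: "t \<in> {x..b} \<inter> f -` {0}" and t_min: "\<And>w. w \<in> {x..b} \<inter> f -` {0} \<Longrightarrow> t \<le> w"
    using compact_attains_inf[OF closed_zeros, of x b] zero_between[of x b] assms by fastforce
  obtain s where s: "s \<in> {a..x} \<inter> f -` {0} \<union> {a}"
    and s_max: "\<And>w. w \<in> {a..x} \<inter> f -` {0} \<union> {a} \<Longrightarrow> w \<le> s"
    using compact_attains_sup[of "{a..x} \<inter> f -` {0} \<union> {a}"] closed_zeros[of a x] assms by fastforce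
  show ?thesis
  proof
    show "a \<le> s" "s < x" "s = a \<or> f s = 0" using s assms(2,4) by (auto simp: order.order_iff_strict)
    show "x < t" "t < b" "f t = 0" using t assms(4,5) by (auto simp: order.order_iff_strict)
    show "f y < 0" if y: "s < y" "y < t" for y
    proof (rule ccontr)
      assume "\<not> f y < 0"
      show False
      proof (cases "y \<le> x")
        case True
        then obtain w where "y \<le> w" "w \<le> x" "f w = 0"
          using zero_between[of y x] \<open>\<not> f y < 0\<close> \<open>a \<le> s\<close> y assms by force
        then show False using s_max[of w] y \<open>a \<le> s\<close> by force
      next
        case False
        then obtain w where "x \<le> w" "w \<le> y" "f w = 0"
          using zero_between[of x y] \<open>\<not> f y < 0\<close> \<open>t < b\<close> y assms by force
        then show False using t_min[of w] y \<open>t < b\<close> by force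
      qed
    qed
  qed
qed

lemma continuous_on_bounded_half_open:
  fixes c :: "real \<Rightarrow> real"
  assumes "continuous_on {0..1} c"
  shows "bounded (c ` {0<..1})"
  using compact_imp_bounded[OF compact_continuous_image[OF assms]] by (rule bounded_subset) auto

lemma tendsto_zero_mult_bounded:
  fixes f g :: "real \<Rightarrow> real"
  assumes "(f \<longlongrightarrow> 0) F" "\<forall>\<^sub>F x in F. \<bar>g x\<bar> \<le> B"
  shows "((\<lambda>x. f x * g x) \<longlongrightarrow> 0) F"
proof -
  have "Bfun g F" using assms(2) by (auto intro: BfunI)
  then show ?thesis
    using assms(1) bounded_bilinear.Zfun_prod_Bfun[OF bounded_bilinear_mult] by (simp add: tendsto_Zfun_iff)
qed

section \<open>The radial equation\<close>

lemma Sk_has_real_derivative: "(Sk k has_real_derivative Ck k r) (at r within s)"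
  unfolding Sk_def[abs_def] Ck_def by (auto intro!: derivative_eq_intros)

lemma continuous_on_Sk: "continuous_on A (Sk k)"
  using Sk_has_real_derivative by (metis DERIV_continuous_on)

lemma continuous_on_Ck: "continuous_on A (Ck k)"
  by (cases "k = 1") (simp_all add: Ck_def[abs_def] continuous_on_cos continuous_on_cosh)

lemma Sk_pos:
  assumes "0 < r" "r \<le> 1"
  shows "Sk k r > 0"
  using assms pi_gt3 sin_gt_zero[of r] unfolding Sk_def by auto

lemma cosh_le_two:
  assumes "0 \<le> x" "x \<le> 1"
  shows "cosh x \<le> (2::real)"
proof -
  have "cosh x \<le> cosh 1"
    using assms by (simp add: cosh_real_nonneg_le_iff)
  also have "exp (-1) \<le> (1::real)"
    by simp
  then have "exp 1 + exp (-1) \<le> (4::real)"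
    using exp_le by linarith
  then have "cosh (1::real) \<le> 2"
    unfolding cosh_def by simp
  finally show ?thesis .
qed

lemma Sk_le:
  assumes "0 < r" "r \<le> 1"
  shows "Sk k r \<le> 2 * r"
proof (cases "k = 1")
  case True
  then show ?thesis using assms sin_x_le_x[of r] unfolding Sk_def by auto
next
  case False
  have "(sinh has_real_derivative cosh x) (at x)" for x :: real
    by (auto intro!: derivative_eq_intros)
  then obtain \<xi> where \<xi>: "0 < \<xi>" "\<xi> < r" "sinh r - sinh 0 = (r - 0) * cosh \<xi>"
    using MVT2[OF assms(1), of sinh cosh] by blast
  have "cosh \<xi> \<le> 2"
    using \<xi> assms by (intro cosh_le_two) auto
  then have "sinh r \<le> r * 2"
    using \<xi> assms mult_left_mono[of "cosh \<xi>" 2 r] by auto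
  then show ?thesis using False unfolding Sk_def by auto
qed

definition radial_weight :: "nat \<Rightarrow> int \<Rightarrow> real \<Rightarrow> real" where
  "radial_weight n k r = Sk k r ^ (n - 1)"

lemma radial_weight_pos: "0 < r \<Longrightarrow> r \<le> 1 \<Longrightarrow> radial_weight n k r > 0"
  unfolding radial_weight_def using Sk_pos by auto

lemma radial_weight_le:
  assumes "n \<ge> 2" "0 < r" "r \<le> 1"
  shows "radial_weight n k r \<le> 2 ^ (n - 1) * r"
proof -
  have "radial_weight n k r \<le> (2 * r) ^ (n - 1)"
    unfolding radial_weight_def
    using Sk_le[OF assms(2,3)] less_imp_le[OF Sk_pos[OF assms(2,3)]] by (intro power_mono) auto
  also have "\<dots> = 2 ^ (n - 1) * r ^ (n - 1)"
    by (simp add: power_mult_distrib)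
  also have "r ^ (n - 1) \<le> r ^ 1"
    using assms by (intro power_decreasing) auto
  finally show ?thesis by simp
qed

lemma radial_weight_has_real_derivative:
  "(radial_weight n k has_real_derivative real (n - 1) * (Ck k r * Sk k r ^ (n - 2))) (at r within s)"
  unfolding radial_weight_def[abs_def]
  using DERIV_power[OF Sk_has_real_derivative[of k r s], of "n - 1"] by (simp add: numeral_2_eq_2)

lemma radial_weight_eq_Sk_mult: "n \<ge> 2 \<Longrightarrow> radial_weight n k r = Sk k r * Sk k r ^ (n - 2)"
  unfolding radial_weight_def by (metis Suc_1 Suc_diff_Suc Suc_le_eq diff_Suc_1 power_Suc)

lemma radial_solD:
  assumes "radial_sol n k mu u u' u''" "r \<in> {0<..1}"
  shows "(u has_real_derivative u' r) (at r within {0<..1})"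
    and "(u' has_real_derivative u'' r) (at r within {0<..1})"
    and "u'' r = - (real n - 1) * (Ck k r / Sk k r) * u' r - mu * u r"
proof -
  have "(u has_real_derivative u' r) (at r within {0<..1})"
    and "(u' has_real_derivative u'' r) (at r within {0<..1})"
    and "u'' r + (real n - 1) * (Ck k r / Sk k r) * u' r + mu * u r = 0"
    using assms unfolding radial_sol_def by auto
  then show "(u has_real_derivative u' r) (at r within {0<..1})"
    and "(u' has_real_derivative u'' r) (at r within {0<..1})"
    and "u'' r = - (real n - 1) * (Ck k r / Sk k r) * u' r - mu * u r"
    by linarith+
qed

lemma radial_sol_uminus:
  assumes "radial_sol n k mu u u' u''"
  shows "radial_sol n k mu (\<lambda>r. - u r) (\<lambda>r. - u' r) (\<lambda>r. - u'' r)"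
  using assms unfolding radial_sol_def
  by (auto intro!: DERIV_minus simp only: mult_minus_right minus_add_distrib[symmetric] neg_equal_0_iff_equal)

lemma radial_sol_flux_has_real_derivative:
  assumes "n \<ge> 2" and u: "radial_sol n k mu u u' u''" and r: "r \<in> {0<..1}"
  shows "((\<lambda>r. radial_weight n k r * u' r) has_real_derivative - mu * radial_weight n k r * u r)
           (at r within {0<..1})"
proof -
  note u'' = radial_solD(2)[OF u r] and ode = radial_solD(3)[OF u r]
  have "Sk k r > 0" using Sk_pos r by auto
  then have "radial_weight n k r * u'' r + real (n - 1) * (Ck k r * Sk k r ^ (n - 2)) * u' r
      = - mu * radial_weight n k r * u r"
    unfolding ode radial_weight_eq_Sk_mult[OF assms(1)] using assms(1) by (simp add: field_simps of_nat_diff)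
  then show ?thesis
    using DERIV_mult'[OF radial_weight_has_real_derivative[of n k] u''] by simp
qed

lemma radial_sol_flux_lipschitz:
  assumes "n \<ge> 2" and u: "radial_sol n k mu u u' u''"
    and B: "\<forall>r\<in>{0<..1}. \<bar>u r\<bar> \<le> B"
    and "0 < x" "x \<le> y" "y \<le> 1"
  shows "\<bar>radial_weight n k y * u' y - radial_weight n k x * u' x\<bar> \<le> \<bar>mu\<bar> * 2 ^ (n - 1) * B * (y - x)"
proof (cases "x = y")
  case False
  then obtain \<xi> where \<xi>: "x < \<xi>" "\<xi> < y"
    "radial_weight n k y * u' y - radial_weight n k x * u' x = (- mu * radial_weight n k \<xi> * u \<xi>) * (y - x)"
    using radial_mvt[OF radial_sol_flux_has_real_derivative[OF assms(1) u], of x y] assms(4-6) by auto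
  have w: "0 < radial_weight n k \<xi>" "radial_weight n k \<xi> \<le> 2 ^ (n - 1)"
    using radial_weight_pos[of \<xi>] radial_weight_le[OF assms(1), of \<xi> k] \<xi> assms(4-6)
    by (auto intro: order_trans[OF _ mult_left_le])
  have "\<bar>- mu * radial_weight n k \<xi> * u \<xi>\<bar> \<le> \<bar>mu\<bar> * 2 ^ (n - 1) * B"
    unfolding abs_mult using w B \<xi> assms(4-6) by (auto intro!: mult_mono)
  then have "\<bar>- mu * radial_weight n k \<xi> * u \<xi>\<bar> * (y - x) \<le> \<bar>mu\<bar> * 2 ^ (n - 1) * B * (y - x)"
    using \<xi> by (intro mult_right_mono) auto
  then show ?thesis
    unfolding \<xi>(3) abs_mult using \<xi> by simp
qed simp

text \<open>A large flux at \<open>s\<close> persists on \<open>(0,s]\<close> by the Lipschitz bound, which forces \<open>u' \<ge> A/r\<close>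
  and hence logarithmic growth of \<open>u\<close>.\<close>

lemma radial_sol_flux_le:
  assumes "n \<ge> 2" and u: "radial_sol n k mu u u' u''"
    and B: "\<forall>r\<in>{0<..1}. \<bar>u r\<bar> \<le> B" and s: "0 < s" "s \<le> 1"
  shows "radial_weight n k s * u' s \<le> 2 * (\<bar>mu\<bar> * 2 ^ (n - 1) * B) * s"
proof (rule ccontr)
  define K where "K = \<bar>mu\<bar> * 2 ^ (n - 1) * B"
  define h where "h r = radial_weight n k r * u' r" for r
  define C :: real where "C = 2 ^ (n - 1)"
  assume "\<not> ?thesis"
  then have hs: "h s > 2 * K * s" unfolding K_def h_def by simp
  have "B \<ge> 0" using B s by force
  then have "K \<ge> 0" unfolding K_def by simp
  then have "2 * K * s \<ge> 0" using s by simp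
  then have "h s > 0" using hs by linarith
  have ge: "h s / (2 * C) / r \<le> u' r" if r: "0 < r" "r \<le> s" for r
  proof -
    have "\<bar>h s - h r\<bar> \<le> K * (s - r)"
      using radial_sol_flux_lipschitz[OF assms(1) u B r] s unfolding h_def K_def by simp
    moreover have "K * (s - r) \<le> K * s" using r \<open>K \<ge> 0\<close> by (simp add: mult_left_mono)
    ultimately have "h s / 2 \<le> h r" using hs by linarith
    moreover have w: "0 < radial_weight n k r" "radial_weight n k r \<le> C * r"
      using radial_weight_pos[of r] radial_weight_le[OF assms(1), of r k] r s unfolding C_def by auto
    ultimately have "h s / 2 / (C * r) \<le> h r / radial_weight n k r"
      using \<open>h s > 0\<close> by (intro frac_le) auto
    then show ?thesis unfolding h_def using w by (simp add: field_simps)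
  qed
  show False
  proof (rule radial_deriv_ge_inverse_unbounded[OF _ B s _ ge])
    show "(u has_real_derivative u' r) (at r within {0<..1})" if "r \<in> {0<..1}" for r
      by (rule radial_solD(1)[OF u that])
    show "h s / (2 * C) > 0" using \<open>h s > 0\<close> unfolding C_def by simp
  qed
qed

lemma radial_sol_flux_tendsto_0:
  assumes "n \<ge> 2" and u: "radial_sol n k mu u u' u''" and "bounded (u ` {0<..1})"
  shows "((\<lambda>r. radial_weight n k r * u' r) \<longlongrightarrow> 0) (at_right 0)"
proof -
  obtain B where B: "\<forall>r\<in>{0<..1}. \<bar>u r\<bar> \<le> B"
    using assms(3) unfolding bounded_iff by auto
  define K where "K = 2 * (\<bar>mu\<bar> * 2 ^ (n - 1) * B)"
  have "\<bar>radial_weight n k s * u' s\<bar> \<le> K * s" if "0 < s" "s \<le> 1" for s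
  proof -
    have "\<forall>r\<in>{0<..1}. \<bar>- u r\<bar> \<le> B" using B by simp
    from radial_sol_flux_le[OF assms(1) radial_sol_uminus[OF u] this that]
      radial_sol_flux_le[OF assms(1) u B that]
    show ?thesis unfolding K_def by linarith
  qed
  moreover have "\<forall>\<^sub>F s in at_right 0. 0 < s \<and> s \<le> (1::real)"
    unfolding eventually_at_right_field by (intro exI[of _ 1]) auto
  ultimately have "\<forall>\<^sub>F s in at_right 0. norm (radial_weight n k s * u' s) \<le> K * s"
    by (auto elim: eventually_mono)
  moreover have "((\<lambda>s. K * s) \<longlongrightarrow> 0) (at_right (0::real))"
    by (auto intro!: tendsto_eq_intros)
  ultimately show ?thesis
    by (rule Lim_null_comparison)
qed

definition radial_wronskian ::
  "nat \<Rightarrow> int \<Rightarrow> (real \<Rightarrow> real) \<Rightarrow> (real \<Rightarrow> real) \<Rightarrow> (real \<Rightarrow> real) \<Rightarrow> (real \<Rightarrow> real) \<Rightarrow> real \<Rightarrow> real"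
  where "radial_wronskian n k u u' v v' r = radial_weight n k r * (u' r * v r - u r * v' r)"

lemma radial_wronskian_has_real_derivative:
  assumes "n \<ge> 2" and u: "radial_sol n k mu u u' u''" and v: "radial_sol n k lam v v' v''"
    and r: "r \<in> {0<..1}"
  shows "(radial_wronskian n k u u' v v' has_real_derivative (lam - mu) * radial_weight n k r * u r * v r)
           (at r within {0<..1})"
proof -
  have "radial_wronskian n k u u' v v' = (\<lambda>r. (radial_weight n k r * u' r) * v r - u r * (radial_weight n k r * v' r))"
    unfolding radial_wronskian_def by (auto simp: fun_eq_iff algebra_simps)
  moreover have "((\<lambda>r. (radial_weight n k r * u' r) * v r - u r * (radial_weight n k r * v' r))
      has_real_derivative (radial_weight n k r * u' r) * v' r + (- mu * radial_weight n k r * u r) * v r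
        - (u r * (- lam * radial_weight n k r * v r) + u' r * (radial_weight n k r * v' r)))
      (at r within {0<..1})"
    by (intro DERIV_diff DERIV_mult' radial_sol_flux_has_real_derivative[OF assms(1) u r]
        radial_sol_flux_has_real_derivative[OF assms(1) v r] radial_solD(1)[OF u r] radial_solD(1)[OF v r])
  ultimately show ?thesis by (simp add: algebra_simps)
qed

lemma radial_wronskian_tendsto_0:
  assumes "n \<ge> 2" and u: "radial_sol n k mu u u' u''" "bounded (u ` {0<..1})"
    and v: "radial_sol n k lam v v' v''" "bounded (v ` {0<..1})"
  shows "(radial_wronskian n k u u' v v' \<longlongrightarrow> 0) (at_right 0)"
proof -
  have eventually_in: "\<forall>\<^sub>F r in at_right 0. r \<in> {0<..(1::real)}"
    unfolding eventually_at_right_field by (intro exI[of _ 1]) auto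
  obtain Bu Bv where "\<forall>r\<in>{0<..1}. \<bar>u r\<bar> \<le> Bu" "\<forall>r\<in>{0<..1}. \<bar>v r\<bar> \<le> Bv"
    using u(2) v(2) unfolding bounded_iff real_norm_def by (meson image_eqI)
  then have "\<forall>\<^sub>F r in at_right 0. \<bar>u r\<bar> \<le> Bu" "\<forall>\<^sub>F r in at_right 0. \<bar>v r\<bar> \<le> Bv"
    using eventually_in by (auto elim: eventually_mono)
  then have "((\<lambda>r. (radial_weight n k r * u' r) * v r - (radial_weight n k r * v' r) * u r) \<longlongrightarrow> 0 - 0) (at_right 0)"
    by (intro tendsto_diff tendsto_zero_mult_bounded[OF radial_sol_flux_tendsto_0[OF assms(1) u]]
        tendsto_zero_mult_bounded[OF radial_sol_flux_tendsto_0[OF assms(1) v]])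
  then show ?thesis
    unfolding radial_wronskian_def by (simp add: algebra_simps)
qed

section \<open>Hopf lemma and Sturm comparison\<close>

lemma energy_derivative_nonneg:
  fixes p q X lam Q :: real
  assumes "\<bar>X\<bar> \<le> Q"
  shows "0 \<le> 2 * p * q + 2 * q * (- X * q - lam * p) + (1 + 2 * Q + \<bar>lam\<bar>) * (p\<^sup>2 + q\<^sup>2)"
proof -
  have "- (p\<^sup>2 + q\<^sup>2) \<le> 2 * p * q"
    using zero_le_power2[of "p + q"] by (simp add: power2_sum)
  moreover have "2 * lam * p * q \<le> \<bar>lam\<bar> * (p\<^sup>2 + q\<^sup>2)"
  proof -
    have "2 * \<bar>p * q\<bar> \<le> p\<^sup>2 + q\<^sup>2"
      using zero_le_power2[of "\<bar>p\<bar> - \<bar>q\<bar>"] by (simp add: power2_diff abs_mult)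
    then have "\<bar>lam\<bar> * (2 * \<bar>p * q\<bar>) \<le> \<bar>lam\<bar> * (p\<^sup>2 + q\<^sup>2)"
      by (rule mult_left_mono) simp
    moreover have "2 * lam * p * q \<le> \<bar>lam\<bar> * (2 * \<bar>p * q\<bar>)"
      by (simp add: abs_mult mult.assoc abs_le_iff flip: abs_mult)
    ultimately show ?thesis by linarith
  qed
  moreover have "X * q\<^sup>2 \<le> Q * q\<^sup>2"
    using assms by (intro mult_right_mono) auto
  moreover have "0 \<le> Q * p\<^sup>2"
    using assms by simp
  ultimately show ?thesis
    by (simp add: algebra_simps power2_eq_square)
qed

lemma bounded_coefficient:
  assumes "0 < a"
  obtains Q where "\<forall>r\<in>{a..1}. \<bar>(real n - 1) * (Ck k r / Sk k r)\<bar> \<le> Q"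
proof -
  have "\<forall>r\<in>{a..1}. Sk k r \<noteq> 0"
  proof
    fix r
    assume "r \<in> {a..1}"
    then show "Sk k r \<noteq> 0" using Sk_pos[of r k] assms by simp
  qed
  then have "continuous_on {a..1} (\<lambda>r. (real n - 1) * (Ck k r / Sk k r))"
    by (intro continuous_intros continuous_on_Ck continuous_on_Sk) auto
  then have "compact ((\<lambda>r. (real n - 1) * (Ck k r / Sk k r)) ` {a..1})"
    by (intro compact_continuous_image) auto
  then obtain Q where "\<forall>x\<in>(\<lambda>r. (real n - 1) * (Ck k r / Sk k r)) ` {a..1}. norm x \<le> Q"
    using compact_imp_bounded bounded_iff by blast
  then show ?thesis using that by auto
qed

text \<open>Unique continuation from zero Cauchy data at \<open>r = 1\<close>: the energy
  \<open>(u\<^sup>2 + u'\<^sup>2) e\<^sup>L\<^sup>r\<close> is nondecreasing for \<open>L\<close> large.\<close>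

lemma radial_sol_eq_0_if_boundary_data_0:
  assumes u: "radial_sol n k mu u u' u''" and "u 1 = 0" "u' 1 = 0" and r: "0 < r" "r \<le> 1"
  shows "u r = 0"
proof -
  obtain Q where Q: "\<forall>x\<in>{r..1}. \<bar>(real n - 1) * (Ck k x / Sk k x)\<bar> \<le> Q"
    using bounded_coefficient[OF r(1)] by blast
  define L where "L = 1 + 2 * Q + \<bar>mu\<bar>"
  define g where "g x = ((u x)\<^sup>2 + (u' x)\<^sup>2) * exp (L * x)" for x
  define g' where "g' x = (2 * u x * u' x + 2 * u' x * u'' x + L * ((u x)\<^sup>2 + (u' x)\<^sup>2)) * exp (L * x)" for x
  have "g r \<le> g 1"
  proof (rule radial_deriv_nonneg_imp_le[of g g'])
    show "(g has_real_derivative g' x) (at x within {0<..1})" if "x \<in> {0<..1}" for x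
      unfolding g_def[abs_def] g'_def using radial_solD(1,2)[OF u that]
      by (auto intro!: derivative_eq_intros simp: algebra_simps)
    show "0 \<le> g' x" if "r < x" "x < 1" for x
    proof -
      define X where "X = (real n - 1) * (Ck k x / Sk k x)"
      have "\<bar>X\<bar> \<le> Q" using Q that unfolding X_def by simp
      moreover have "u'' x = - X * u' x - mu * u x"
        using radial_solD(3)[OF u, of x] that r unfolding X_def by (simp only: mult_minus_left) force
      ultimately show ?thesis
        using energy_derivative_nonneg[of X Q "u x" "u' x" mu] unfolding g'_def L_def by simp
    qed
  qed (use r in auto)
  then have "(u r)\<^sup>2 + (u' r)\<^sup>2 \<le> 0"
    unfolding g_def using \<open>u 1 = 0\<close> \<open>u' 1 = 0\<close> by (simp add: mult_le_0_iff)
  then show ?thesis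
    by (simp add: sum_power2_le_zero_iff)
qed

lemma dirichlet_eigenfunction_deriv_one_neg:
  assumes "dirichlet_eigenfunction n k lam phi phi' phi''"
  shows "phi' 1 < 0"
proof -
  have phi: "radial_sol n k lam phi phi' phi''" and pos: "\<forall>r\<in>{0..<1}. phi r > 0" and "phi 1 = 0"
    using assms unfolding dirichlet_eigenfunction_def by auto
  have "phi (1/2) > 0"
    using pos by simp
  then have "phi' 1 \<noteq> 0"
    using radial_sol_eq_0_if_boundary_data_0[OF phi \<open>phi 1 = 0\<close>, of "1/2"] by auto
  moreover have "((\<lambda>r. - phi r) has_real_derivative - phi' 1) (at 1 within {0<..1})"
    using radial_solD(1)[OF phi] by (auto intro: DERIV_minus)
  then have "0 \<le> - phi' 1"
    by (rule deriv_nonneg_at_right_end[of _ _ _ 0]) (use pos \<open>phi 1 = 0\<close> in \<open>auto intro!: less_imp_le\<close>)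
  ultimately show ?thesis by simp
qed

text \<open>Sturm comparison: on a negative excursion \<open>(s,t)\<close> of \<open>c\<close> the Wronskian of \<open>c\<close> and \<open>phi\<close>
  strictly decreases, yet it is \<open>\<ge> 0\<close> at \<open>t\<close> and has a limit \<open>\<le> 0\<close> at \<open>s\<close>.\<close>

lemma radial_sol_nonneg_below_eigenvalue:
  assumes "n \<ge> 2" and phi: "dirichlet_eigenfunction n k lam phi phi' phi''" and "mu < lam"
    and c: "radial_sol n k mu c c' c''" "continuous_on {0..1} c" "c 1 > 0" and r: "r \<in> {0<..1}"
  shows "c r \<ge> 0"
proof (rule ccontr)
  assume "\<not> c r \<ge> 0"
  then have "c r < 0" by simp
  then have "r < 1" using c(3) r by (cases "r = 1") auto
  have phi_sol: "radial_sol n k lam phi phi' phi''" and phi_pos: "\<forall>r\<in>{0..<1}. phi r > 0"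
    and "bounded (phi ` {0<..1})"
    using phi unfolding dirichlet_eigenfunction_def by auto
  obtain s t where st: "0 \<le> s" "s < r" "r < t" "t < 1" "c t = 0" "s = 0 \<or> c s = 0"
    and neg: "\<And>y. s < y \<Longrightarrow> y < t \<Longrightarrow> c y < 0"
    using continuous_on_neg_excursion[OF c(2) _ \<open>r < 1\<close> \<open>c r < 0\<close> c(3)] r by auto
  define W where "W = radial_wronskian n k c c' phi phi'"
  have W': "(W has_real_derivative (lam - mu) * radial_weight n k y * c y * phi y) (at y within {0<..1})"
    if "y \<in> {0<..1}" for y
    unfolding W_def by (rule radial_wronskian_has_real_derivative[OF assms(1) c(1) phi_sol that])
  have W_decreasing: "W y < W x" if "s < x" "x < y" "y \<le> t" for x y
  proof (rule radial_deriv_neg_imp_less[OF W'])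
    show "(lam - mu) * radial_weight n k z * c z * phi z < 0" if "x < z" "z < y" for z
      using \<open>mu < lam\<close> radial_weight_pos[of z n k] neg[of z] phi_pos that \<open>s < x\<close> \<open>y \<le> t\<close> st
      by (simp add: mult_pos_neg mult_neg_pos)
  qed (use that st in auto)
  have "0 \<le> c' t"
    by (rule deriv_nonneg_at_right_end[OF radial_solD(1)[OF c(1)], of t s])
      (use st neg in \<open>auto intro: less_imp_le\<close>)
  moreover have "0 < phi t" using phi_pos st by simp
  ultimately have "0 \<le> W t"
    unfolding W_def radial_wronskian_def using radial_weight_pos[of t n k] st by simp
  moreover obtain L where L: "(W \<longlongrightarrow> L) (at_right s)" "L \<le> 0"
  proof (cases "s = 0")
    case True
    have "(W \<longlongrightarrow> 0) (at_right s)"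
      unfolding W_def True using continuous_on_bounded_half_open[OF c(2)]
      by (rule radial_wronskian_tendsto_0[OF assms(1) c(1) _ phi_sol \<open>bounded (phi ` {0<..1})\<close>])
    then show ?thesis using that by blast
  next
    case False
    then have "0 < s" "c s = 0" using st by auto
    have "c' s \<le> 0"
      by (rule deriv_nonpos_at_left_end[OF radial_solD(1)[OF c(1)], of s t])
        (use st neg \<open>0 < s\<close> in \<open>auto intro: less_imp_le\<close>)
    moreover have "0 < phi s" using phi_pos st by simp
    ultimately have "W s \<le> 0"
      unfolding W_def radial_wronskian_def using radial_weight_pos[of s n k] st \<open>c s = 0\<close> \<open>0 < s\<close>
      by (simp add: mult_nonneg_nonpos mult_nonpos_nonneg)
    moreover have "isCont W s"
      using W'[of s] \<open>0 < s\<close> st by (intro DERIV_isCont radial_deriv_at_interior) auto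
    then have "(W \<longlongrightarrow> W s) (at_right s)"
      by (simp add: isCont_def filterlim_at_split)
    ultimately show ?thesis using that by blast
  qed
  moreover have "W t < L"
    using st by (intro strict_antimono_less_right_limit[OF L(1)] W_decreasing) auto
  ultimately show False by linarith
qed

section \<open>The slope of c at the boundary\<close>

lemma radial_deriv_one_le_small_shift:
  assumes "n \<ge> 2" and phi: "dirichlet_eigenfunction n k lam phi phi' phi''"
    and M: "\<forall>r\<in>{0<..1}. phi r \<le> M" and "0 < \<epsilon>" "\<epsilon> \<le> lam"
    and c: "radial_sol n k (lam - \<epsilon>) c c' c''" "continuous_on {0..1} c" "c 1 = - phi' 1"
  shows "c' 1 \<le> - (lam - \<epsilon>) * (phi' 1)\<^sup>2 / (\<epsilon> * M)"
proof -
  define mu where "mu = lam - \<epsilon>"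
  have c_sol: "radial_sol n k mu c c' c''" using c(1) unfolding mu_def .
  have phi_sol: "radial_sol n k lam phi phi' phi''" and "bounded (phi ` {0<..1})"
    and "phi 1 = 0" and "phi (1/2) > 0"
    using phi unfolding dirichlet_eigenfunction_def by auto
  moreover have "phi (1/2) \<le> M" using M by simp
  ultimately have "M > 0" by linarith
  have "c 1 > 0" using dirichlet_eigenfunction_deriv_one_neg[OF phi] c(3) by simp
  define G where "G r = - M * (radial_weight n k r * c' r) - (mu / \<epsilon>) * radial_wronskian n k c c' phi phi' r" for r
  have "(G \<longlongrightarrow> - M * 0 - (mu / \<epsilon>) * 0) (at_right 0)"
    unfolding G_def
    by (intro tendsto_intros radial_sol_flux_tendsto_0[OF assms(1) c_sol] continuous_on_bounded_half_open[OF c(2)]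
        radial_wronskian_tendsto_0[OF assms(1) c_sol _ phi_sol \<open>bounded (phi ` {0<..1})\<close>])
  then have G_lim: "(G \<longlongrightarrow> 0) (at_right 0)" by simp
  have G': "(G has_real_derivative mu * radial_weight n k r * c r * (M - phi r)) (at r within {0<..1})"
    if "r \<in> {0<..1}" for r
  proof -
    have "(G has_real_derivative - M * (- mu * radial_weight n k r * c r)
        - (mu / \<epsilon>) * ((lam - mu) * radial_weight n k r * c r * phi r)) (at r within {0<..1})"
      unfolding G_def[abs_def]
      by (intro DERIV_diff DERIV_cmult radial_sol_flux_has_real_derivative[OF assms(1) c_sol that]
          radial_wronskian_has_real_derivative[OF assms(1) c_sol phi_sol that])
    moreover have "- M * (- mu * radial_weight n k r * c r)
        - (mu / \<epsilon>) * ((lam - mu) * radial_weight n k r * c r * phi r)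
        = mu * radial_weight n k r * c r * (M - phi r)"
      using \<open>0 < \<epsilon>\<close> unfolding mu_def by (simp add: field_simps)
    ultimately show ?thesis by simp
  qed
  have "0 \<le> mu * radial_weight n k r * c r * (M - phi r)" if "0 < r" "r < 1" for r
    using radial_sol_nonneg_below_eigenvalue[OF assms(1) phi _ c(1,2) \<open>c 1 > 0\<close>, of r]
      radial_weight_pos[of r n k] M that \<open>0 < \<epsilon>\<close> \<open>\<epsilon> \<le> lam\<close> unfolding mu_def by simp
  then have "0 \<le> G 1"
    by (intro radial_deriv_nonneg_imp_limit_le[OF G' G_lim]) auto
  also have "G 1 = - radial_weight n k 1 * (M * c' 1 + (mu / \<epsilon>) * (phi' 1)\<^sup>2)"
    unfolding G_def radial_wronskian_def using \<open>phi 1 = 0\<close> c(3) by (simp add: algebra_simps power2_eq_square)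
  finally have "M * c' 1 \<le> - (mu / \<epsilon>) * (phi' 1)\<^sup>2"
    using radial_weight_pos[of 1 n k] by (simp add: mult_le_0_iff)
  then show ?thesis
    using \<open>M > 0\<close> \<open>0 < \<epsilon>\<close> unfolding mu_def by (simp add: field_simps)
qed

lemma radial_sol_flux_nonneg_mono_above_eigenvalue:
  assumes "n \<ge> 2" and phi: "dirichlet_eigenfunction n k lam phi phi' phi''" and "0 \<le> lam" "lam < \<epsilon>"
    and c: "radial_sol n k (lam - \<epsilon>) c c' c''" "continuous_on {0..1} c" "c 1 > 0"
    and "0 < x" "x \<le> y" "y \<le> 1"
  shows "0 \<le> radial_weight n k x * c' x"
    and "radial_weight n k x * c' x \<le> radial_weight n k y * c' y"
proof -
  define h where "h r = radial_weight n k r * c' r" for r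
  have h': "(h has_real_derivative (\<epsilon> - lam) * radial_weight n k r * c r) (at r within {0<..1})"
    if "r \<in> {0<..1}" for r
    using radial_sol_flux_has_real_derivative[OF assms(1) c(1) that] unfolding h_def[abs_def] by simp
  have h'_nonneg: "0 \<le> (\<epsilon> - lam) * radial_weight n k r * c r" if "0 < r" "r \<le> 1" for r
    using radial_sol_nonneg_below_eigenvalue[OF assms(1) phi _ c, of r] radial_weight_pos[OF that, of n k]
      that \<open>0 \<le> lam\<close> \<open>lam < \<epsilon>\<close> by simp
  have "(h \<longlongrightarrow> 0) (at_right 0)"
    unfolding h_def[abs_def]
    by (rule radial_sol_flux_tendsto_0[OF assms(1) c(1) continuous_on_bounded_half_open[OF c(2)]])
  then show "0 \<le> radial_weight n k x * c' x"
    unfolding h_def[symmetric] using assms(8-10) h'_nonneg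
    by (intro radial_deriv_nonneg_imp_limit_le[OF h']) auto
  show "radial_weight n k x * c' x \<le> radial_weight n k y * c' y"
    unfolding h_def[symmetric] using assms(8-10) h'_nonneg by (intro radial_deriv_nonneg_imp_le[OF h']) auto
qed

text \<open>The last condition on \<open>\<delta>\<close> keeps \<open>c \<ge> c(1)/2\<close> on \<open>[1 - \<delta>, 1]\<close>, where \<open>c' \<le> w(1) X / p0\<close>.\<close>

lemma radial_shift_bounded_if_deriv_one_bounded:
  assumes "n \<ge> 2" and phi: "dirichlet_eigenfunction n k lam phi phi' phi''" and "0 \<le> lam" "lam < \<epsilon>"
    and c: "radial_sol n k (lam - \<epsilon>) c c' c''" "continuous_on {0..1} c" "c 1 = - phi' 1"
    and p0: "0 < p0" "\<forall>r\<in>{1/2..1}. p0 \<le> radial_weight n k r"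
    and X: "0 < X" "c' 1 \<le> X"
    and \<delta>: "0 < \<delta>" "\<delta> \<le> 1/2" "radial_weight n k 1 * X * \<delta> \<le> p0 * (- phi' 1) / 2"
  shows "(\<epsilon> - lam) * p0 * (- phi' 1) * \<delta> \<le> 2 * radial_weight n k 1 * X"
proof -
  define A where "A = - phi' 1"
  define K where "K = radial_weight n k 1 * X / p0"
  define h where "h r = radial_weight n k r * c' r" for r
  have "0 < A" using dirichlet_eigenfunction_deriv_one_neg[OF phi] unfolding A_def by simp
  note h_mono = radial_sol_flux_nonneg_mono_above_eigenvalue[OF assms(1) phi \<open>0 \<le> lam\<close> \<open>lam < \<epsilon>\<close> c(1,2)]
  have h_le: "h r \<le> radial_weight n k 1 * X" if "0 < r" "r \<le> 1" for r
    using h_mono(2)[of r 1] that c(3) \<open>0 < A\<close> X radial_weight_pos[of 1 n k] unfolding h_def A_def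
    by (simp add: order_trans[OF _ mult_left_mono])
  have c'_le: "c' r \<le> K" if "1/2 \<le> r" "r \<le> 1" for r
  proof -
    have "0 \<le> h r" "p0 \<le> radial_weight n k r"
      using h_mono(1)[of r r] that c(3) \<open>0 < A\<close> p0 unfolding h_def A_def by auto
    then have "h r / radial_weight n k r \<le> radial_weight n k 1 * X / p0"
      using h_le[of r] that \<open>0 < p0\<close> by (intro frac_le) auto
    then show ?thesis unfolding h_def K_def using \<open>0 < p0\<close> \<open>p0 \<le> radial_weight n k r\<close> by simp
  qed
  have c_ge: "A / 2 \<le> c r" if "1 - \<delta> \<le> r" "r \<le> 1" for r
  proof -
    have "K * r - c r \<le> K * 1 - c 1"
      using that \<delta> c'_le by (intro radial_deriv_nonneg_imp_le[of "\<lambda>r. K * r - c r" "\<lambda>r. K - c' r"])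
        (auto intro!: derivative_eq_intros radial_solD(1)[OF c(1)])
    moreover have "K * \<delta> \<le> A / 2"
      using \<delta>(3) \<open>0 < p0\<close> unfolding K_def A_def by (simp add: field_simps)
    moreover have "K * (1 - r) \<le> K * \<delta>"
      using that X \<open>0 < p0\<close> radial_weight_pos[of 1 n k] unfolding K_def by (intro mult_left_mono) auto
    ultimately show ?thesis using c(3) unfolding A_def by (simp add: algebra_simps)
  qed
  define a where "a = (\<epsilon> - lam) * p0 * (A / 2)"
  have "h (1 - \<delta>) - a * (1 - \<delta>) \<le> h 1 - a * 1"
  proof (rule radial_deriv_nonneg_imp_le[of "\<lambda>r. h r - a * r"
        "\<lambda>r. (\<epsilon> - lam) * radial_weight n k r * c r - a"])
    show "((\<lambda>r. h r - a * r) has_real_derivative (\<epsilon> - lam) * radial_weight n k r * c r - a)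
        (at r within {0<..1})" if "r \<in> {0<..1}" for r
    proof -
      have "(h has_real_derivative (\<epsilon> - lam) * radial_weight n k r * c r) (at r within {0<..1})"
        using radial_sol_flux_has_real_derivative[OF assms(1) c(1) that] unfolding h_def[abs_def] by simp
      then show ?thesis by (auto intro!: derivative_eq_intros)
    qed
    show "0 \<le> (\<epsilon> - lam) * radial_weight n k r * c r - a" if "1 - \<delta> < r" "r < 1" for r
    proof -
      have "p0 * (A / 2) \<le> radial_weight n k r * c r"
        using p0 c_ge[of r] that \<delta> \<open>0 < A\<close>
        by (intro mult_mono) (auto intro: order_trans[OF less_imp_le[OF \<open>0 < p0\<close>]])
      then show ?thesis using \<open>lam < \<epsilon>\<close> unfolding a_def by (simp add: mult.assoc mult_left_mono)
    qed
  qed (use \<delta> in auto)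
  moreover have "0 \<le> h (1 - \<delta>)"
    using h_mono(1)[of "1 - \<delta>" "1 - \<delta>"] \<delta> c(3) \<open>0 < A\<close> unfolding h_def A_def by auto
  ultimately have "a * \<delta> \<le> h 1" by (simp add: right_diff_distrib)
  with h_le[of 1] show ?thesis unfolding a_def A_def by simp
qed

lemma eventually_radial_deriv_one_le:
  assumes "n \<ge> 2" and phi: "dirichlet_eigenfunction n k lam phi phi' phi''" and "0 < lam"
  shows "\<forall>\<^sub>F \<epsilon> in at_right 0. \<forall>c c' c''. continuous_on {0..1} c \<and> radial_sol n k (lam - \<epsilon>) c c' c''
           \<and> c 1 = - phi' 1 \<longrightarrow> c' 1 \<le> Z"
proof -
  obtain B where B: "\<forall>r\<in>{0<..1}. \<bar>phi r\<bar> \<le> B"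
    using phi unfolding dirichlet_eigenfunction_def bounded_iff by auto
  define M where "M = max B 1"
  have M: "\<forall>r\<in>{0<..1}. phi r \<le> M" "0 < M" using B unfolding M_def by force+
  define A where "A = (phi' 1)\<^sup>2"
  have "0 < A" using dirichlet_eigenfunction_deriv_one_neg[OF phi] unfolding A_def by simp
  define e0 where "e0 = min (lam / 2) (lam * A / (2 * M * (\<bar>Z\<bar> + 1)))"
  have "0 < e0" unfolding e0_def using \<open>0 < lam\<close> \<open>0 < A\<close> M by auto
  have "\<forall>\<^sub>F \<epsilon> in at_right 0. 0 < \<epsilon> \<and> \<epsilon> < e0"
    unfolding eventually_at_right_field using \<open>0 < e0\<close> by (intro exI[of _ e0]) auto
  then show ?thesis
  proof (rule eventually_mono, safe)
    fix \<epsilon> c c' c''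
    assume "0 < \<epsilon>" "\<epsilon> < e0" and c: "continuous_on {0..1} c" "radial_sol n k (lam - \<epsilon>) c c' c''"
      "c 1 = - phi' 1"
    have "0 < 2 * M * (\<bar>Z\<bar> + 1)" using M(2) by (simp add: add_pos_nonneg)
    moreover have "\<epsilon> < lam * A / (2 * M * (\<bar>Z\<bar> + 1))" "\<epsilon> \<le> lam / 2"
      using \<open>\<epsilon> < e0\<close> unfolding e0_def by auto
    ultimately have "\<epsilon> \<le> lam / 2" "\<epsilon> * (2 * M * (\<bar>Z\<bar> + 1)) \<le> lam * A"
      by (simp_all add: pos_less_divide_eq)
    then have "\<epsilon> * M * (\<bar>Z\<bar> + 1) \<le> (lam - \<epsilon>) * A"
      using \<open>0 < A\<close> mult_right_mono[of "lam / 2" "lam - \<epsilon>" A] by (simp add: algebra_simps)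
    then have "\<bar>Z\<bar> + 1 \<le> (lam - \<epsilon>) * A / (\<epsilon> * M)"
      using \<open>0 < \<epsilon>\<close> M(2) by (simp add: field_simps)
    moreover have "c' 1 \<le> - (lam - \<epsilon>) * A / (\<epsilon> * M)"
      unfolding A_def using \<open>0 < \<epsilon>\<close> \<open>\<epsilon> \<le> lam / 2\<close> \<open>0 < lam\<close>
      by (intro radial_deriv_one_le_small_shift[OF assms(1) phi M(1) _ _ c(2,1,3)]) auto
    moreover have "- (lam - \<epsilon>) * A / (\<epsilon> * M) = - ((lam - \<epsilon>) * A / (\<epsilon> * M))"
      by (simp only: mult_minus_left minus_divide_left)
    ultimately show "c' 1 \<le> Z" by linarith
  qed
qed

lemma eventually_radial_deriv_one_ge:
  assumes "n \<ge> 2" and phi: "dirichlet_eigenfunction n k lam phi phi' phi''" and "0 \<le> lam"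
  shows "\<forall>\<^sub>F \<epsilon> in at_top. \<forall>c c' c''. continuous_on {0..1} c \<and> radial_sol n k (lam - \<epsilon>) c c' c''
           \<and> c 1 = - phi' 1 \<longrightarrow> Z \<le> c' 1"
proof -
  obtain r0 where "r0 \<in> {1/2..1}" and r0: "\<forall>r\<in>{1/2..1}. radial_weight n k r0 \<le> radial_weight n k r"
    using continuous_attains_inf[of "{1/2..1}" "radial_weight n k"]
      DERIV_continuous_on[OF radial_weight_has_real_derivative] by force
  define p0 where "p0 = radial_weight n k r0"
  have "0 < p0" unfolding p0_def using \<open>r0 \<in> {1/2..1}\<close> radial_weight_pos by force
  define A where "A = - phi' 1"
  have "0 < A" using dirichlet_eigenfunction_deriv_one_neg[OF phi] unfolding A_def by simp
  define p1 where "p1 = radial_weight n k 1"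
  have "0 < p1" unfolding p1_def using radial_weight_pos by simp
  define X where "X = max 1 Z"
  have "0 < X" unfolding X_def by simp
  define \<delta> where "\<delta> = min (1/2) (p0 * A / (2 * p1 * X))"
  have \<delta>: "0 < \<delta>" "\<delta> \<le> 1/2" "p1 * X * \<delta> \<le> p0 * A / 2"
    unfolding \<delta>_def using \<open>0 < p0\<close> \<open>0 < A\<close> \<open>0 < p1\<close> \<open>0 < X\<close> by (auto simp: min_def field_simps)
  have "0 < p0 * A * \<delta>" using \<open>0 < p0\<close> \<open>0 < A\<close> \<delta> by simp
  show ?thesis
  proof (rule eventually_mono[OF eventually_gt_at_top[of "lam + 2 * p1 * X / (p0 * A * \<delta>)"]], safe)
    fix \<epsilon> c c' c''
    assume \<epsilon>: "lam + 2 * p1 * X / (p0 * A * \<delta>) < \<epsilon>"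
      and c: "continuous_on {0..1} c" "radial_sol n k (lam - \<epsilon>) c c' c''" "c 1 = - phi' 1"
    have "0 < 2 * p1 * X / (p0 * A * \<delta>)"
      using \<open>0 < p0 * A * \<delta>\<close> \<open>0 < p1\<close> \<open>0 < X\<close> by simp
    then have "lam < \<epsilon>" using \<epsilon> by linarith
    show "Z \<le> c' 1"
    proof (rule ccontr)
      assume "\<not> Z \<le> c' 1"
      then have "c' 1 \<le> X" unfolding X_def by simp
      with radial_shift_bounded_if_deriv_one_bounded[OF assms(1) phi \<open>0 \<le> lam\<close> \<open>lam < \<epsilon>\<close> c(2,1,3)
          \<open>0 < p0\<close> _ \<open>0 < X\<close>] r0 \<delta>
      have "(\<epsilon> - lam) * (p0 * A * \<delta>) \<le> 2 * p1 * X"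
        unfolding p0_def p1_def A_def by (simp add: mult.assoc)
      moreover have "2 * p1 * X / (p0 * A * \<delta>) < \<epsilon> - lam" using \<epsilon> by simp
      then have "2 * p1 * X < (\<epsilon> - lam) * (p0 * A * \<delta>)"
        using \<open>0 < p0 * A * \<delta>\<close> by (simp add: pos_divide_less_eq)
      ultimately show False by simp
    qed
  qed
qed

theorem proposition7p1:
  fixes n :: nat and k :: int and lam1 :: real
    and phi phi' phi'' :: "real \<Rightarrow> real"
    and c c' c'' :: "real \<Rightarrow> real \<Rightarrow> real"
  assumes "n \<ge> 2"
    and "k = 1 \<or> k = -1"
    and "first_eigenvalue n k lam1"
    and "dirichlet_eigenfunction n k lam1 phi phi' phi''"
    and "L2_normalized n k phi"
    and "\<forall>T>0. continuous_on {0..1} (c T) \<and>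
               radial_sol n k (lam1 - (2 * pi / T)\<^sup>2) (c T) (c' T) (c'' T) \<and>
               c T 1 = - phi' 1"
  shows "filterlim (\<lambda>T. c' T 1 + phi'' 1) at_top (at_right 0) \<and>
         filterlim (\<lambda>T. c' T 1 + phi'' 1) at_bot at_top"
proof
  \<comment> \<open>The shift \<open>(2\<pi>/T)\<^sup>2\<close> tends to \<open>\<infinity>\<close> as \<open>T \<rightarrow> 0\<^sup>+\<close> and to \<open>0\<^sup>+\<close> as \<open>T \<rightarrow> \<infinity>\<close>.\<close>
  have "0 < lam1" using assms(3) unfolding first_eigenvalue_def Let_def by auto
  have c: "\<forall>\<^sub>F T in F. continuous_on {0..1} (c T)
      \<and> radial_sol n k (lam1 - (2 * pi / T)\<^sup>2) (c T) (c' T) (c'' T) \<and> c T 1 = - phi' 1"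
    if "\<forall>\<^sub>F T in F. 0 < T" for F
    using that by (rule eventually_mono) (use assms(6) in auto)
  show "filterlim (\<lambda>T. c' T 1 + phi'' 1) at_top (at_right 0)"
    unfolding filterlim_at_top
  proof
    fix Z
    have "filterlim (\<lambda>T. (2 * pi / T)\<^sup>2) at_top (at_right 0)" by real_asymp
    from eventually_compose_filterlim[OF eventually_radial_deriv_one_ge[OF assms(1,4)
          less_imp_le[OF \<open>0 < lam1\<close>], of "Z - phi'' 1"] this] c[OF eventually_at_right_less]
    show "\<forall>\<^sub>F T in at_right 0. Z \<le> c' T 1 + phi'' 1"
    proof eventually_elim
      case (elim T)
      then have "Z - phi'' 1 \<le> c' T 1" by blast
      then show ?case by simp
    qed
  qed
  show "filterlim (\<lambda>T. c' T 1 + phi'' 1) at_bot at_top"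
    unfolding filterlim_at_bot
  proof
    fix Z
    have "filterlim (\<lambda>T. (2 * pi / T)\<^sup>2) (at_right 0) at_top" by real_asymp
    from eventually_compose_filterlim[OF eventually_radial_deriv_one_le[OF assms(1,4) \<open>0 < lam1\<close>,
          of "Z - phi'' 1"] this] c[OF eventually_gt_at_top]
    show "\<forall>\<^sub>F T in at_top. c' T 1 + phi'' 1 \<le> Z"
    proof eventually_elim
      case (elim T)
      then have "c' T 1 \<le> Z - phi'' 1" by blast
      then show ?case by simp
    qed
  qed
qed

end
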